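(* Let $\gamma\in\mathbb{R}$ with $\sin\gamma\neq0$, $q=e^{\mathrm{i}\gamma}$, $[x]_q=\sin(\gamma x)/\sin\gamma$, and $\varphi\in\mathbb{C}$ with $\sin\varphi\neq0$. For $s\in\mathbb{C}$, on the space $\mathfrak{S}_s$ with orthonormal basis $\{|k\rangle:k\in\mathbb{Z}_{\ge0}\}$ let $\mathbf{s}^z_s=\sum_{k\ge0}(s-k)|k\rangle\langle k|$, $\mathbf{s}^+_s=\sum_{k\ge0}[k+1]_q|k\rangle\langle k+1|$, $\mathbf{s}^-_s=\sum_{k\ge0}[2s-k]_q|k+1\rangle\langle k|$, and define the Lax operator $\mathbf{L}(\varphi,s)=\sum_{i,j=1}^2 e^{ij}\otimes\mathbf{L}_{ij}(\varphi,s)$ with $$\begin{pmatrix}\mathbf{L}_{11}&\mathbf{L}_{12}\\ \mathbf{L}_{21}&\mathbf{L}_{22}\end{pmatrix}=\begin{pmatrix}\sin(\varphi+\gamma\mathbf{s}^z_s)&(\sin\gamma)\mathbf{s}^-_s\\ (\sin\gamma)\mathbf{s}^+_s&\sin(\varphi-\gamma\mathbf{s}^z_s)\end{pmatrix},$$ and the operator on $(\mathbb{C}^2)^{\otimes n}$ $$W_n(\varphi,s)=\sum_{i_1,j_1,\dots,i_n,j_n}\langle0|\mathbf{L}_{i_1j_1}(\varphi,s)\cdots\mathbf{L}_{i_nj_n}(\varphi,s)|0\rangle\,e^{i_1j_1}\otimes\cdots\otimes e^{i_nj_n}.$$ Next let $\widetilde{\mathfrak{S}}$ be the space with orthonormal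 basis $\{|\mathrm{L}\rangle,|\mathrm{R}\rangle,|1\rangle,|2\rangle,\dots\}$, let $\tilde{\mathbf{s}}^z=\sum_{k\ge1}(-k)|k\rangle\langle k|$, $\tilde{\mathbf{s}}^+=\sum_{k\ge1}[k+1]_q|k\rangle\langle k+1|$, $\tilde{\mathbf{s}}^-=\sum_{k\ge1}[-k]_q|k+1\rangle\langle k|$ (all vanishing on $|\mathrm{L}\rangle,|\mathrm{R}\rangle$, and with $\cos(\gamma\tilde{\mathbf{s}}^z)$, $\sin(\gamma\tilde{\mathbf{s}}^z)$ acting on $|k\rangle$, $k\ge1$, by $\cos(\gamma k)$, $-\sin(\gamma k)$ and vanishing on $|\mathrm{L}\rangle,|\mathrm{R}\rangle$), and set \begin{align*} \widetilde{\mathbf{L}}^0(\varphi)&=|\mathrm{L}\rangle\langle\mathrm{L}|+|\mathrm{R}\rangle\langle\mathrm{R}|+\cos(\gamma\tilde{\mathbf{s}}^z),& \widetilde{\mathbf{L}}^z(\varphi)&=\cot\varphi\,\sin(\gamma\tilde{\mathbf{s}}^z),\\ \widetilde{\mathbf{L}}^+(\varphi)&=|1\rangle\langle\mathrm{R}|+\tfrac{\sin\gamma}{\sin\varphi}\tilde{\mathbf{s}}^-,& \widetilde{\mathbf{L}}^-(\varphi)&=|\mathrm{L}\rangle\langle1|+\tfrac{\sin\gamma}{\sin\varphi}\tilde{\mathbf{s}}^+, \end{align*} and $Z_n(\varphi)=\sum_{\alpha_1,\dots,\alpha_n\in\{0,+,-,z\}}\langle\mathrm{L}|\widetilde{\mathbf{L}}^{\alpha_1}(\varphi)\cdots\widetilde{\mathbf{L}}^{\alpha_n}(\varphi)|\mathrm{R}\rangle\,\sigma^{\alpha_1}\otimes\cdots\otimes\sigma^{\alpha_n}$.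 Then $$\frac{1}{(\sin\varphi)^n}\,\partial_s W_n(\varphi,s)\Big|_{s=0}=\frac{2\gamma\sin\gamma}{(\sin\varphi)^2}Z_n(\varphi)+\gamma\cot\varphi\,M_n,$$ where $M_n=\sum_{x=1}^n\mathbb{1}_{2^{x-1}}\otimes\sigma^z\otimes\mathbb{1}_{2^{n-x}}$.
   Context: $e^{ij}=|i\rangle\langle j|$ are $2\times2$ matrix units; $\sigma^0=\mathbb{1}_2$, $\sigma^+=e^{12}$, $\sigma^-=e^{21}$, $\sigma^z=e^{11}-e^{22}$. Functions of the diagonal operator $\mathbf{s}^z_s$ (such as $\sin(\varphi\pm\gamma\mathbf{s}^z_s)$) act diagonally on the basis $|k\rangle$. $n\ge1$. *)

theory Defs
  imports Complex_Main
begin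

text \<open>Vectors in the infinite-dimensional spaces are represented by their coordinate
functions (formal sequences); the (band) operators below are defined by their action on
coordinates, which is exactly the action of the stated sums of matrix units.
Operators on (C^2)^{\<otimes>n} are represented by their matrix entries, indexed by
lists of length n with entries in {1,2}.\<close>

definition qnum :: "real \<Rightarrow> complex \<Rightarrow> complex" where
  "qnum \<gamma> x = sin (complex_of_real \<gamma> * x) / complex_of_real (sin \<gamma>)"

definition emat :: "nat \<Rightarrow> nat \<Rightarrow> (nat \<Rightarrow> nat \<Rightarrow> complex)" where
  "emat i j = (\<lambda>a b. if a = i \<and> b = j then 1 else 0)"

definition idxs :: "nat \<Rightarrow> nat list set" where
  "idxs n = {xs. length xs = n \<and> set xs \<subseteq> {1,2}}"

definition tensor_entry :: "(nat \<Rightarrow> nat \<Rightarrow> complex) list \<Rightarrow> nat list \<Rightarrow> nat list \<Rightarrow> complex" where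
  "tensor_entry As a b = (\<Prod>m<length As. (As ! m) (a ! m) (b ! m))"

datatype alpha = A0 | Ap | Am | Az

definition sigma :: "alpha \<Rightarrow> (nat \<Rightarrow> nat \<Rightarrow> complex)" where
  "sigma \<alpha> = (case \<alpha> of
      A0 \<Rightarrow> (\<lambda>a b. emat 1 1 a b + emat 2 2 a b)
    | Ap \<Rightarrow> emat 1 2
    | Am \<Rightarrow> emat 2 1
    | Az \<Rightarrow> (\<lambda>a b. emat 1 1 a b - emat 2 2 a b))"

definition sz_diag :: "complex \<Rightarrow> nat \<Rightarrow> complex" where
  "sz_diag s k = s - of_nat k"

definition splus :: "real \<Rightarrow> complex \<Rightarrow> (nat \<Rightarrow> complex) \<Rightarrow> (nat \<Rightarrow> complex)" where
  "splus \<gamma> s v = (\<lambda>k. qnum \<gamma> (of_nat k + 1) * v (k + 1))"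

definition sminus :: "real \<Rightarrow> complex \<Rightarrow> (nat \<Rightarrow> complex) \<Rightarrow> (nat \<Rightarrow> complex)" where
  "sminus \<gamma> s v = (\<lambda>k. if k = 0 then 0 else qnum \<gamma> (2 * s - of_nat (k - 1)) * v (k - 1))"

definition Lop :: "real \<Rightarrow> complex \<Rightarrow> complex \<Rightarrow> nat \<Rightarrow> nat \<Rightarrow> (nat \<Rightarrow> complex) \<Rightarrow> (nat \<Rightarrow> complex)" where
  "Lop \<gamma> \<phi> s i j v =
     (if i = 1 \<and> j = 1 then (\<lambda>k. sin (\<phi> + complex_of_real \<gamma> * sz_diag s k) * v k)
      else if i = 1 \<and> j = 2 then (\<lambda>k. complex_of_real (sin \<gamma>) * sminus \<gamma> s v k)
      else if i = 2 \<and> j = 1 then (\<lambda>k. complex_of_real (sin \<gamma>) * splus \<gamma> s v k)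
      else if i = 2 \<and> j = 2 then (\<lambda>k. sin (\<phi> - complex_of_real \<gamma> * sz_diag s k) * v k)
      else (\<lambda>k. 0))"

text \<open>Matrix element <0| A_1 ... A_n |0>.\<close>
definition vac_elem :: "((nat \<Rightarrow> complex) \<Rightarrow> (nat \<Rightarrow> complex)) list \<Rightarrow> complex" where
  "vac_elem As = (foldr (\<circ>) As id) (\<lambda>k. if k = 0 then 1 else 0) 0"

definition Wn :: "real \<Rightarrow> nat \<Rightarrow> complex \<Rightarrow> complex \<Rightarrow> nat list \<Rightarrow> nat list \<Rightarrow> complex" where
  "Wn \<gamma> n \<phi> s = (\<lambda>a b. \<Sum>is\<in>idxs n. \<Sum>js\<in>idxs n.
      vac_elem (map2 (Lop \<gamma> \<phi> s) is js) * tensor_entry (map2 emat is js) a b)"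

text \<open>TK m stands for the basis vector |m+1>.\<close>
datatype tb = TL | TR | TK nat

definition tsz_eig :: "nat \<Rightarrow> complex" where
  "tsz_eig m = - (of_nat m + 1)"  \<comment> \<open>eigenvalue of s~z on |m+1>\<close>

definition tsplus :: "real \<Rightarrow> (tb \<Rightarrow> complex) \<Rightarrow> (tb \<Rightarrow> complex)" where
  "tsplus \<gamma> v = (\<lambda>x. case x of TK m \<Rightarrow> qnum \<gamma> (of_nat m + 2) * v (TK (m + 1)) | _ \<Rightarrow> 0)"

definition tsminus :: "real \<Rightarrow> (tb \<Rightarrow> complex) \<Rightarrow> (tb \<Rightarrow> complex)" where
  "tsminus \<gamma> v = (\<lambda>x. case x of TK m \<Rightarrow> (if m = 0 then 0 else qnum \<gamma> (- of_nat m) * v (TK (m - 1)))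
                                  | _ \<Rightarrow> 0)"

definition tcos :: "real \<Rightarrow> (tb \<Rightarrow> complex) \<Rightarrow> (tb \<Rightarrow> complex)" where
  "tcos \<gamma> v = (\<lambda>x. case x of TK m \<Rightarrow> cos (complex_of_real \<gamma> * tsz_eig m) * v x | _ \<Rightarrow> 0)"

definition tsin :: "real \<Rightarrow> (tb \<Rightarrow> complex) \<Rightarrow> (tb \<Rightarrow> complex)" where
  "tsin \<gamma> v = (\<lambda>x. case x of TK m \<Rightarrow> sin (complex_of_real \<gamma> * tsz_eig m) * v x | _ \<Rightarrow> 0)"

definition Ltil :: "real \<Rightarrow> complex \<Rightarrow> alpha \<Rightarrow> (tb \<Rightarrow> complex) \<Rightarrow> (tb \<Rightarrow> complex)" where
  "Ltil \<gamma> \<phi> \<alpha> v = (case \<alpha> of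
      A0 \<Rightarrow> (\<lambda>x. (if x = TL then v TL else 0) + (if x = TR then v TR else 0) + tcos \<gamma> v x)
    | Az \<Rightarrow> (\<lambda>x. (cos \<phi> / sin \<phi>) * tsin \<gamma> v x)
    | Ap \<Rightarrow> (\<lambda>x. (if x = TK 0 then v TR else 0)
                 + (complex_of_real (sin \<gamma>) / sin \<phi>) * tsminus \<gamma> v x)
    | Am \<Rightarrow> (\<lambda>x. (if x = TL then v (TK 0) else 0)
                 + (complex_of_real (sin \<gamma>) / sin \<phi>) * tsplus \<gamma> v x))"

text \<open>Matrix element <L| A_1 ... A_n |R>.\<close>
definition LR_elem :: "((tb \<Rightarrow> complex) \<Rightarrow> (tb \<Rightarrow> complex)) list \<Rightarrow> complex" where
  "LR_elem As = (foldr (\<circ>) As id) (\<lambda>x. if x = TR then 1 else 0) TL"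

definition Zn :: "real \<Rightarrow> nat \<Rightarrow> complex \<Rightarrow> nat list \<Rightarrow> nat list \<Rightarrow> complex" where
  "Zn \<gamma> n \<phi> = (\<lambda>a b. \<Sum>as\<in>{as. length as = n}.
      LR_elem (map (Ltil \<gamma> \<phi>) as) * tensor_entry (map sigma as) a b)"

definition Mn :: "nat \<Rightarrow> nat list \<Rightarrow> nat list \<Rightarrow> complex" where
  "Mn n = (\<lambda>a b. \<Sum>x=1..n. tensor_entry
      (replicate (x - 1) (sigma A0) @ [sigma Az] @ replicate (n - x) (sigma A0)) a b)"

end

theory Submission
  imports Defs
begin

text \<open>Write v(s) for the vector
L_{a_1 b_1}(s) ... L_{a_n b_n}(s) |0\<rangle> and w for T_{a_1 b_1} ... T_{a_n b_n} |R\<rangle>, where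
T_{ij} = \<Sum>_\<alpha> (\<sigma>^\<alpha>)_{ij} L~^\<alpha>, so that \<langle>L|w\<rangle> is entry (a, b) of Z_n. Since [2s]_q vanishes at s = 0,
v(0) = (sin \<phi>)^n \<delta>_{ab} |0\<rangle>; likewise \<langle>R|w\<rangle> = \<delta>_{ab}. Induction on the length of the word, adding
factors on the left, shows that v'(0) has coordinate
(sin \<phi>)^n (2\<gamma> sin \<gamma> / sin^2 \<phi> \<langle>L|w\<rangle> + \<gamma> cot \<phi> (M_n)_{ab}) at |0\<rangle> and (sin \<phi>)^n (2\<gamma> / sin \<phi>) \<langle>k|w\<rangle>
at |k\<rangle> for k \<ge> 1. By the product rule the induction step is one identity for each matrix unit
e^{ij}, relating L_{ij}(0) and \<partial>_s L_{ij}(0) to T_{ij}; for the diagonal units it is the addition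
formula for sin (\<phi> \<mp> \<gamma> k).\<close>

lemma UNIV_alpha: "(UNIV :: alpha set) = {A0, Ap, Am, Az}"
  using alpha.exhaust by auto

lemma finite_UNIV_alpha [simp]: "finite (UNIV :: alpha set)"
  by (simp add: UNIV_alpha)

lemma finite_lists_length_UNIV:
  "finite (UNIV :: 'a set) \<Longrightarrow> finite {xs :: 'a list. length xs = n}"
  using finite_lists_length_eq[of "UNIV :: 'a set" n] by simp

lemma sum_lists_length_Suc:
  assumes "finite (UNIV :: 'a set)"
  shows "(\<Sum>xs\<in>{xs :: 'a list. length xs = Suc n}. g xs) = (\<Sum>x\<in>UNIV. \<Sum>xs\<in>{xs. length xs = n}. g (x # xs))"
proof -
  have "{xs :: 'a list. length xs = Suc n} = case_prod (#) ` (UNIV \<times> {xs. length xs = n})"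
    by (auto simp: length_Suc_conv image_iff)
  moreover have "inj_on (case_prod (#)) (UNIV \<times> {xs :: 'a list. length xs = n})"
    by (auto simp: inj_on_def)
  ultimately show ?thesis
    using assms by (simp add: sum.reindex sum.cartesian_product finite_lists_length_UNIV case_prod_unfold)
qed

lemma tensor_entry_Cons: "tensor_entry (A # As) (a # as) (b # bs) = A a b * tensor_entry As as bs"
  unfolding tensor_entry_def by (simp add: prod.lessThan_Suc_shift del: prod.lessThan_Suc)

lemma tensor_entry_emat:
  assumes "length is = length a" "length js = length b" "length a = length b"
  shows "tensor_entry (map2 emat is js) a b = (if is = a \<and> js = b then 1 else 0)"
  using assms
proof (induction a arbitrary: "is" js b)
  case Nil then show ?case by (simp add: tensor_entry_def)
next
  case (Cons a0 a)
  then obtain i is' j js' b0 b' where "is = i # is'" "js = j # js'" "b = b0 # b'"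
    by (metis length_Suc_conv)
  with Cons show ?case by (auto simp: tensor_entry_Cons emat_def)
qed

lemma finite_idxs: "finite (idxs n)"
  unfolding idxs_def using finite_lists_length_eq[of "{1, 2::nat}" n] by (simp add: conj_commute)

fun lax_state :: "real \<Rightarrow> complex \<Rightarrow> complex \<Rightarrow> (nat \<times> nat) list \<Rightarrow> nat \<Rightarrow> complex" where
  "lax_state \<gamma> \<phi> s [] = (\<lambda>k. if k = 0 then 1 else 0)"
| "lax_state \<gamma> \<phi> s ((i, j) # ps) = Lop \<gamma> \<phi> s i j (lax_state \<gamma> \<phi> s ps)"

lemma Wn_entry:
  assumes "a \<in> idxs n" "b \<in> idxs n"
  shows "Wn \<gamma> n \<phi> s a b = lax_state \<gamma> \<phi> s (zip a b) 0"
proof -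
  have "Wn \<gamma> n \<phi> s a b = (\<Sum>is\<in>idxs n. if is = a then
      (\<Sum>js\<in>idxs n. if js = b then vac_elem (map2 (Lop \<gamma> \<phi> s) a js) else 0) else 0)"
    unfolding Wn_def
    by (intro sum.cong refl) (use assms in \<open>auto simp: tensor_entry_emat idxs_def intro!: sum.cong\<close>)
  also have "\<dots> = vac_elem (map2 (Lop \<gamma> \<phi> s) a b)"
    using assms by (simp add: finite_idxs)
  also have "\<dots> = lax_state \<gamma> \<phi> s (zip a b) 0"
  proof -
    have "foldr (\<circ>) (map (\<lambda>(i, j). Lop \<gamma> \<phi> s i j) ps) id (\<lambda>k. if k = 0 then 1 else 0)
        = lax_state \<gamma> \<phi> s ps" for ps
      by (induction ps) auto
    then show ?thesis by (simp add: vac_elem_def case_prod_unfold)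
  qed
  finally show ?thesis .
qed

definition aux_lax :: "real \<Rightarrow> complex \<Rightarrow> nat \<Rightarrow> nat \<Rightarrow> (tb \<Rightarrow> complex) \<Rightarrow> tb \<Rightarrow> complex" where
  "aux_lax \<gamma> \<phi> i j v = (\<lambda>x. \<Sum>\<alpha>\<in>UNIV. sigma \<alpha> i j * Ltil \<gamma> \<phi> \<alpha> v x)"

fun aux_state :: "real \<Rightarrow> complex \<Rightarrow> (nat \<times> nat) list \<Rightarrow> tb \<Rightarrow> complex" where
  "aux_state \<gamma> \<phi> [] = (\<lambda>x. if x = TR then 1 else 0)"
| "aux_state \<gamma> \<phi> ((i, j) # ps) = aux_lax \<gamma> \<phi> i j (aux_state \<gamma> \<phi> ps)"

lemma Ltil_sum:
  "finite I \<Longrightarrow> Ltil \<gamma> \<phi> \<alpha> (\<lambda>y. \<Sum>i\<in>I. c i * f i y) x = (\<Sum>i\<in>I. c i * Ltil \<gamma> \<phi> \<alpha> (f i) x)"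
  unfolding Ltil_def tcos_def tsin_def tsplus_def tsminus_def
  by (cases \<alpha>; cases x) (auto simp: sum_distrib_left sum.distrib sum_divide_distrib algebra_simps)

lemma aux_state_expansion:
  assumes "length a = n" "length b = n"
  shows "(\<Sum>as\<in>{as. length as = n}. foldr (\<circ>) (map (Ltil \<gamma> \<phi>) as) id (\<lambda>x. if x = TR then 1 else 0) x
      * tensor_entry (map sigma as) a b) = aux_state \<gamma> \<phi> (zip a b) x"
  using assms
proof (induction n arbitrary: a b x)
  case 0 then show ?case by (simp add: tensor_entry_def)
next
  case (Suc n)
  then obtain a0 a' b0 b' where ab: "a = a0 # a'" "b = b0 # b'" "length a' = n" "length b' = n"
    by (metis length_Suc_conv)
  let ?R = "\<lambda>as. foldr (\<circ>) (map (Ltil \<gamma> \<phi>) as) id (\<lambda>x. if x = TR then 1 else 0)"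
  have IH: "(\<lambda>y. \<Sum>as\<in>{as. length as = n}. tensor_entry (map sigma as) a' b' * ?R as y) = aux_state \<gamma> \<phi> (zip a' b')"
    by (intro ext, subst mult.commute, rule Suc.IH[OF ab(3,4)])
  have "(\<Sum>as\<in>{as. length as = Suc n}. ?R as x * tensor_entry (map sigma as) a b)
     = (\<Sum>\<alpha>\<in>UNIV. sigma \<alpha> a0 b0 *
          (\<Sum>as\<in>{as. length as = n}. tensor_entry (map sigma as) a' b' * Ltil \<gamma> \<phi> \<alpha> (?R as) x))"
    by (simp add: sum_lists_length_Suc ab tensor_entry_Cons sum_distrib_left algebra_simps)
  also have "\<dots> = (\<Sum>\<alpha>\<in>UNIV. sigma \<alpha> a0 b0 * Ltil \<gamma> \<phi> \<alpha> (aux_state \<gamma> \<phi> (zip a' b')) x)"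
    by (simp add: Ltil_sum finite_lists_length_UNIV flip: IH)
  also have "\<dots> = aux_state \<gamma> \<phi> (zip a b) x"
    by (simp add: ab aux_lax_def)
  finally show ?case .
qed

lemma Zn_entry:
  assumes "length a = n" "length b = n"
  shows "Zn \<gamma> n \<phi> a b = aux_state \<gamma> \<phi> (zip a b) TL"
  unfolding Zn_def LR_elem_def by (rule aux_state_expansion[OF assms])

fun unit_entry :: "(nat \<times> nat) list \<Rightarrow> complex" where
  "unit_entry [] = 1"
| "unit_entry ((i, j) # ps) = sigma A0 i j * unit_entry ps"

fun sz_sum_entry :: "(nat \<times> nat) list \<Rightarrow> complex" where
  "sz_sum_entry [] = 0"
| "sz_sum_entry ((i, j) # ps) = sigma A0 i j * sz_sum_entry ps + sigma Az i j * unit_entry ps"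

lemma unit_entry_eq: "length a = length b \<Longrightarrow> tensor_entry (replicate (length a) (sigma A0)) a b = unit_entry (zip a b)"
proof (induction a arbitrary: b)
  case Nil then show ?case by (simp add: tensor_entry_def)
next
  case (Cons a0 a)
  then obtain b0 b' where "b = b0 # b'" by (metis length_Suc_conv)
  with Cons show ?case by (simp add: tensor_entry_Cons)
qed

lemma Mn_entry:
  assumes "length a = n" "length b = n"
  shows "Mn n a b = sz_sum_entry (zip a b)"
  using assms
proof (induction n arbitrary: a b)
  case 0 then show ?case by (simp add: Mn_def)
next
  case (Suc n)
  then obtain a0 a' b0 b' where ab: "a = a0 # a'" "b = b0 # b'" "length a' = n" "length b' = n"
    by (metis length_Suc_conv)
  let ?site = "\<lambda>n x. replicate (x - 1) (sigma A0) @ [sigma Az] @ replicate (n - x) (sigma A0)"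
  have "Mn (Suc n) a b = tensor_entry (?site (Suc n) 1) a b + (\<Sum>x=Suc 1..Suc n. tensor_entry (?site (Suc n) x) a b)"
    unfolding Mn_def by (subst sum.atLeast_Suc_atMost) auto
  also have "(\<Sum>x=Suc 1..Suc n. tensor_entry (?site (Suc n) x) a b) = (\<Sum>x=1..n. tensor_entry (?site (Suc n) (Suc x)) a b)"
    by (rule sum.shift_bounds_cl_Suc_ivl)
  also have "\<dots> = (\<Sum>x=1..n. sigma A0 a0 b0 * tensor_entry (?site n x) a' b')"
  proof (intro sum.cong refl)
    fix x assume "x \<in> {1..n}"
    then have "?site (Suc n) (Suc x) = sigma A0 # ?site n x" by (cases x) auto
    then show "tensor_entry (?site (Suc n) (Suc x)) a b = sigma A0 a0 b0 * tensor_entry (?site n x) a' b'"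
      by (simp add: ab tensor_entry_Cons)
  qed
  also have "\<dots> = sigma A0 a0 b0 * Mn n a' b'" by (simp add: Mn_def sum_distrib_left)
  finally show ?case using Suc.IH[OF ab(3,4)] unit_entry_eq[of a' b'] ab by (simp add: tensor_entry_Cons)
qed

lemma splus_vacuum: "splus \<gamma> s (\<lambda>k. if k = 0 then c else 0) = (\<lambda>k. 0)"
  by (simp add: splus_def fun_eq_iff)

lemma sminus_vacuum_at_zero: "sminus \<gamma> 0 (\<lambda>k. if k = 0 then c else 0) = (\<lambda>k. 0)"
proof
  fix k
  show "sminus \<gamma> 0 (\<lambda>k. if k = 0 then c else 0) k = 0"
    by (cases k) (simp_all add: sminus_def qnum_def)
qed

lemma lax_state_at_zero:
  "lax_state \<gamma> \<phi> 0 ps = (\<lambda>k. if k = 0 then sin \<phi> ^ length ps * unit_entry ps else 0)"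
proof (induction ps)
  case (Cons p ps)
  obtain i j where "p = (i, j)" by fastforce
  then show ?case
    by (simp add: Cons.IH Lop_def sz_diag_def splus_vacuum sminus_vacuum_at_zero sigma_def emat_def fun_eq_iff)
qed (simp add: fun_eq_iff)

lemma aux_lax_TR: "aux_lax \<gamma> \<phi> i j v TR = sigma A0 i j * v TR"
  by (simp add: aux_lax_def UNIV_alpha Ltil_def tcos_def tsin_def tsplus_def tsminus_def)

lemma aux_state_TR: "aux_state \<gamma> \<phi> ps TR = unit_entry ps"
  by (induction ps) (auto simp: aux_lax_TR)

definition lax_state_deriv :: "real \<Rightarrow> complex \<Rightarrow> (nat \<times> nat) list \<Rightarrow> nat \<Rightarrow> complex" where
  "lax_state_deriv \<gamma> \<phi> ps k = sin \<phi> ^ length ps * (case k of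
      0 \<Rightarrow> 2 * complex_of_real \<gamma> * complex_of_real (sin \<gamma>) / (sin \<phi>)\<^sup>2 * aux_state \<gamma> \<phi> ps TL
           + complex_of_real \<gamma> * (cos \<phi> / sin \<phi>) * sz_sum_entry ps
    | Suc m \<Rightarrow> 2 * complex_of_real \<gamma> / sin \<phi> * aux_state \<gamma> \<phi> ps (TK m))"

lemma tsz_eig_scaled: "complex_of_real \<gamma> * tsz_eig m = - (complex_of_real \<gamma> * (of_nat m + 1))"
  by (simp add: tsz_eig_def algebra_simps)

lemma tcos_TK: "tcos \<gamma> v (TK m) = cos (complex_of_real \<gamma> * (of_nat m + 1)) * v (TK m)"
  by (simp add: tcos_def tsz_eig_scaled)

lemma tsin_TK: "tsin \<gamma> v (TK m) = - sin (complex_of_real \<gamma> * (of_nat m + 1)) * v (TK m)"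
  by (simp add: tsin_def tsz_eig_scaled)

lemma aux_lax_simps:
  "aux_lax \<gamma> \<phi> 1 1 v = (\<lambda>x. Ltil \<gamma> \<phi> A0 v x + Ltil \<gamma> \<phi> Az v x)"
  "aux_lax \<gamma> \<phi> 2 2 v = (\<lambda>x. Ltil \<gamma> \<phi> A0 v x - Ltil \<gamma> \<phi> Az v x)"
  "aux_lax \<gamma> \<phi> 1 2 v = Ltil \<gamma> \<phi> Ap v"
  "aux_lax \<gamma> \<phi> 2 1 v = Ltil \<gamma> \<phi> Am v"
  by (simp_all add: aux_lax_def UNIV_alpha sigma_def emat_def fun_eq_iff)

lemma lax_state_deriv_Cons_11:
  assumes "sin \<phi> \<noteq> 0"
  shows "lax_state_deriv \<gamma> \<phi> ((1, 1) # ps) k =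
    complex_of_real \<gamma> * cos (\<phi> - complex_of_real \<gamma> * of_nat k) * lax_state \<gamma> \<phi> 0 ps k
    + sin (\<phi> - complex_of_real \<gamma> * of_nat k) * lax_state_deriv \<gamma> \<phi> ps k"
proof (cases k)
  case 0
  show ?thesis using assms
    unfolding 0 lax_state_deriv_def aux_state.simps aux_lax_simps
    by (simp add: lax_state_at_zero Ltil_def tcos_def tsin_def
        sigma_def emat_def field_simps power2_eq_square)
next
  case (Suc m)
  have sin_shift: "sin (\<phi> - complex_of_real \<gamma> * of_nat (Suc m)) =
      sin \<phi> * cos (complex_of_real \<gamma> * (of_nat m + 1)) - cos \<phi> * sin (complex_of_real \<gamma> * (of_nat m + 1))"
    by (simp add: sin_diff add.commute)
  show ?thesis using assms
    unfolding Suc lax_state_deriv_def aux_state.simps aux_lax_simps sin_shift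
    by (simp add: lax_state_at_zero Ltil_def tcos_TK tsin_TK field_simps)
qed

lemma lax_state_deriv_Cons_22:
  assumes "sin \<phi> \<noteq> 0"
  shows "lax_state_deriv \<gamma> \<phi> ((2, 2) # ps) k =
    - complex_of_real \<gamma> * cos (\<phi> + complex_of_real \<gamma> * of_nat k) * lax_state \<gamma> \<phi> 0 ps k
    + sin (\<phi> + complex_of_real \<gamma> * of_nat k) * lax_state_deriv \<gamma> \<phi> ps k"
proof (cases k)
  case 0
  show ?thesis using assms
    unfolding 0 lax_state_deriv_def aux_state.simps aux_lax_simps
    by (simp add: lax_state_at_zero Ltil_def tcos_def tsin_def
        sigma_def emat_def field_simps power2_eq_square)
next
  case (Suc m)
  have sin_shift: "sin (\<phi> + complex_of_real \<gamma> * of_nat (Suc m)) =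
      sin \<phi> * cos (complex_of_real \<gamma> * (of_nat m + 1)) + cos \<phi> * sin (complex_of_real \<gamma> * (of_nat m + 1))"
    by (simp add: sin_add add.commute)
  show ?thesis using assms
    unfolding Suc lax_state_deriv_def aux_state.simps aux_lax_simps sin_shift
    by (simp add: lax_state_at_zero Ltil_def tcos_TK tsin_TK field_simps)
qed

lemma lax_state_deriv_Cons_12:
  assumes "sin \<phi> \<noteq> 0"
  shows "lax_state_deriv \<gamma> \<phi> ((1, 2) # ps) 0 = 0"
    and "lax_state_deriv \<gamma> \<phi> ((1, 2) # ps) (Suc m) =
      2 * complex_of_real \<gamma> * cos (complex_of_real \<gamma> * of_nat m) * lax_state \<gamma> \<phi> 0 ps m
      + complex_of_real (sin \<gamma>) * qnum \<gamma> (- of_nat m) * lax_state_deriv \<gamma> \<phi> ps m"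
proof -
  show "lax_state_deriv \<gamma> \<phi> ((1, 2) # ps) 0 = 0"
    unfolding lax_state_deriv_def aux_state.simps aux_lax_simps
    by (simp add: Ltil_def tsminus_def sigma_def emat_def)
  show "lax_state_deriv \<gamma> \<phi> ((1, 2) # ps) (Suc m) =
      2 * complex_of_real \<gamma> * cos (complex_of_real \<gamma> * of_nat m) * lax_state \<gamma> \<phi> 0 ps m
      + complex_of_real (sin \<gamma>) * qnum \<gamma> (- of_nat m) * lax_state_deriv \<gamma> \<phi> ps m"
    using assms
    unfolding lax_state_deriv_def aux_state.simps aux_lax_simps
    by (cases m) (simp_all add: lax_state_at_zero aux_state_TR Ltil_def tsminus_def qnum_def field_simps)
qed

lemma lax_state_deriv_Cons_21:
  assumes "sin \<gamma> \<noteq> 0" and "sin \<phi> \<noteq> 0"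
  shows "lax_state_deriv \<gamma> \<phi> ((2, 1) # ps) k =
    complex_of_real (sin \<gamma>) * qnum \<gamma> (of_nat k + 1) * lax_state_deriv \<gamma> \<phi> ps (Suc k)"
  using assms
  unfolding lax_state_deriv_def aux_state.simps aux_lax_simps
  by (cases k) (simp_all add: Ltil_def tsplus_def sigma_def emat_def
      qnum_def sin_of_real field_simps power2_eq_square add.commute)

lemma lax_state_has_derivative:
  assumes "\<forall>(i, j) \<in> set ps. i \<in> {1, 2} \<and> j \<in> {1, 2}" and "sin \<gamma> \<noteq> 0" and "sin \<phi> \<noteq> 0"
  shows "((\<lambda>s. lax_state \<gamma> \<phi> s ps k) has_field_derivative lax_state_deriv \<gamma> \<phi> ps k) (at 0)"
  using assms(1)
proof (induction ps arbitrary: k)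
  case Nil
  show ?case by (simp add: lax_state_deriv_def split: nat.split)
next
  case (Cons p ps)
  have IH: "((\<lambda>s. lax_state \<gamma> \<phi> s ps k') has_field_derivative lax_state_deriv \<gamma> \<phi> ps k') (at 0)" for k'
    using Cons by simp
  from Cons.prems consider "p = (1, 1)" | "p = (2, 2)" | "p = (1, 2)" | "p = (2, 1)" by fastforce
  then show ?case
  proof cases
    case 1
    show ?thesis unfolding 1 lax_state.simps lax_state_deriv_Cons_11[OF assms(3)]
      by (auto simp: Lop_def sz_diag_def algebra_simps intro!: derivative_eq_intros IH)
  next
    case 2
    show ?thesis unfolding 2 lax_state.simps lax_state_deriv_Cons_22[OF assms(3)]
      by (auto simp: Lop_def sz_diag_def algebra_simps intro!: derivative_eq_intros IH)
  next
    case 3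
    show ?thesis
    proof (cases k)
      case 0
      show ?thesis unfolding 3 0 lax_state.simps lax_state_deriv_Cons_12(1)[OF assms(3)]
        by (simp add: Lop_def sminus_def)
    next
      case (Suc m)
      show ?thesis unfolding 3 Suc lax_state.simps lax_state_deriv_Cons_12(2)[OF assms(3)]
        by (auto simp: Lop_def sminus_def qnum_def assms(2) algebra_simps intro!: derivative_eq_intros IH)
    qed
  next
    case 4
    show ?thesis unfolding 4 lax_state.simps lax_state_deriv_Cons_21[OF assms(2,3)]
      by (auto simp: Lop_def splus_def intro!: derivative_eq_intros IH)
  qed
qed

theorem mainTheorem3:
  fixes \<gamma> :: real and \<phi> :: complex and n :: nat
  assumes "sin \<gamma> \<noteq> 0" and "sin \<phi> \<noteq> 0" and "n \<ge> 1"
  shows "\<forall>a\<in>idxs n. \<forall>b\<in>idxs n.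
    ((\<lambda>s. Wn \<gamma> n \<phi> s a b / sin \<phi> ^ n) has_field_derivative
       (2 * complex_of_real \<gamma> * complex_of_real (sin \<gamma>) / (sin \<phi>)\<^sup>2 * Zn \<gamma> n \<phi> a b
        + complex_of_real \<gamma> * (cos \<phi> / sin \<phi>) * Mn n a b)) (at 0)"
proof (intro ballI)
  fix a b assume a: "a \<in> idxs n" and b: "b \<in> idxs n"
  then have len: "length a = n" "length b = n" and "set a \<subseteq> {1, 2}" "set b \<subseteq> {1, 2}"
    by (auto simp: idxs_def)
  then have "\<forall>(i, j) \<in> set (zip a b). i \<in> {1, 2} \<and> j \<in> {1, 2}"
    by (auto dest: set_zip_leftD set_zip_rightD)
  from lax_state_has_derivative[OF this assms(1,2), of 0]
  have "((\<lambda>s. lax_state \<gamma> \<phi> s (zip a b) 0 / sin \<phi> ^ n) has_field_derivative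
      lax_state_deriv \<gamma> \<phi> (zip a b) 0 / sin \<phi> ^ n) (at 0)"
    by (rule DERIV_cdivide)
  then show "((\<lambda>s. Wn \<gamma> n \<phi> s a b / sin \<phi> ^ n) has_field_derivative
       (2 * complex_of_real \<gamma> * complex_of_real (sin \<gamma>) / (sin \<phi>)\<^sup>2 * Zn \<gamma> n \<phi> a b
        + complex_of_real \<gamma> * (cos \<phi> / sin \<phi>) * Mn n a b)) (at 0)"
    using assms(2) by (simp add: Wn_entry[OF a b] Zn_entry[OF len] Mn_entry[OF len] lax_state_deriv_def len)
qed

end
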